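(* For arbitrary nonnegative rates $p_1,\dots,p_n,q_1,\dots,q_n$, the Markov chain on $\Omega_{L,n}$ lumps to the one-dimensional ASEP on $\Psi_{L,n}$ via the map $\Pi$: for every $\omega\in\Omega_{L,n}$ and every $\psi\in\Psi_{L,n}$ with $\psi\neq\Pi(\omega)$, the sum of the transition rates from $\omega$ to configurations in $\Pi^{-1}(\psi)$ equals the ASEP transition rate from $\Pi(\omega)$ to $\psi$. In particular the image under $\Pi$ of the chain on $\Omega_{L,n}$ is the ASEP on $\Psi_{L,n}$.
   Context: Fix $1\le n\le L$. Particle labels $k$ are taken modulo $n$, positions modulo $L$. $\Omega_{L,n}$ is the set of words $w_1\cdots w_L$ on the ring $\mathbb{Z}/L\mathbb{Z}$ over the alphabet $\{\bullet_1,\dots,\bullet_n,\Box_1,\dots,\Box_n\}$ in which each $\bullet_k$ occurs exactly once, the letters $\bullet_1,\dots,\bullet_n$ appear in this cyclic order, and the remaining $L-n$ letters are arbitrary $\Box_i$'s. The chain on $\Omega_{L,n}$ has transitions (displayed segments are consecutive positions, rest unchanged, $C$ a possibly empty word in the $\Box$-letters): (T1) $\bullet_k\Box_i \to \Box_i\bullet_k$ at rate $p_k$, if $i\neq k$; (T2) $\bullet_{k-1}\,C\,\bullet_k\Box_k \to \bullet_{k-1}\Box_{k-1}\,C\,\bullet_k$ at rate $p_k$; (T3) $\Box_i\bullet_k \to \bullet_k\Box_i$ at rate $q_k$, if $i\neq k$; (T4) $\Box_k\bullet_k\,C\,\bullet_{k+1} \to \bullet_k\,C\,\Box_{k+1}\bullet_{k+1}$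 at rate $q_k$. $\Psi_{L,n}$ is the set of words on the ring $\mathbb{Z}/L\mathbb{Z}$ containing each of $\bullet_1,\dots,\bullet_n$ exactly once in this cyclic order and $L-n$ vacancies $\Box$. The ASEP on $\Psi_{L,n}$ has only the transitions $\bullet_k\Box\to\Box\bullet_k$ at rate $p_k$ and $\Box\bullet_k\to\bullet_k\Box$ at rate $q_k$ (on consecutive positions). The map $\Pi:\Omega_{L,n}\to\Psi_{L,n}$ replaces every letter $\Box_i$ by $\Box$. *)

theory Defs
  imports Main "HOL.Real"
begin

(* Conventions: particle / hole labels are 0..n-1 (paper: 1..n), taken mod n;
   positions are 0..L-1 (ring Z/LZ), a configuration is a list of length L.
   Rates p k, q k refer to the paper's p_{k+1}, q_{k+1}. *)

datatype letter = Pt nat | Hl nat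

datatype aletter = APt nat | Vac

definition is_pt :: "letter \<Rightarrow> bool" where
  "is_pt x = (case x of Pt _ \<Rightarrow> True | Hl _ \<Rightarrow> False)"

definition is_apt :: "aletter \<Rightarrow> bool" where
  "is_apt x = (case x of APt _ \<Rightarrow> True | Vac \<Rightarrow> False)"

definition in_Omega :: "nat \<Rightarrow> nat \<Rightarrow> letter list \<Rightarrow> bool" where
  "in_Omega L n w \<longleftrightarrow>
     length w = L \<and>
     (\<forall>x\<in>set w. case x of Pt k \<Rightarrow> k < n | Hl i \<Rightarrow> i < n) \<and>
     (\<forall>k<n. card {i. i < L \<and> w ! i = Pt k} = 1) \<and>
     \<comment> \<open>cyclic order: the next particle clockwise after bullet_k is bullet_{k+1}\<close>
     (\<forall>i<L. \<forall>k d. w ! i = Pt k \<and> 0 < d \<and> d \<le> L \<and> is_pt (w ! ((i + d) mod L))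
        \<and> (\<forall>e. 0 < e \<and> e < d \<longrightarrow> \<not> is_pt (w ! ((i + e) mod L)))
        \<longrightarrow> w ! ((i + d) mod L) = Pt ((k + 1) mod n))"

definition in_Psi :: "nat \<Rightarrow> nat \<Rightarrow> aletter list \<Rightarrow> bool" where
  "in_Psi L n v \<longleftrightarrow>
     length v = L \<and>
     (\<forall>x\<in>set v. case x of APt k \<Rightarrow> k < n | Vac \<Rightarrow> True) \<and>
     (\<forall>k<n. card {i. i < L \<and> v ! i = APt k} = 1) \<and>
     (\<forall>i<L. \<forall>k d. v ! i = APt k \<and> 0 < d \<and> d \<le> L \<and> is_apt (v ! ((i + d) mod L))
        \<and> (\<forall>e. 0 < e \<and> e < d \<longrightarrow> \<not> is_apt (v ! ((i + e) mod L)))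
        \<longrightarrow> v ! ((i + d) mod L) = APt ((k + 1) mod n))"

fun proj_letter :: "letter \<Rightarrow> aletter" where
  "proj_letter (Pt k) = APt k"
| "proj_letter (Hl i) = Vac"

definition Pi :: "letter list \<Rightarrow> aletter list" where
  "Pi w = map proj_letter w"

definition swp :: "'a list \<Rightarrow> nat \<Rightarrow> nat \<Rightarrow> 'a list" where
  "swp w a b = w[a := w ! b, b := w ! a]"

definition back_dist :: "nat \<Rightarrow> letter list \<Rightarrow> nat \<Rightarrow> nat" where
  "back_dist L w j = (LEAST d. 0 < d \<and> is_pt (w ! ((j + L - d) mod L)))"

definition fwd_dist :: "nat \<Rightarrow> letter list \<Rightarrow> nat \<Rightarrow> nat" where
  "fwd_dist L w j = (LEAST d. 0 < d \<and> is_pt (w ! ((j + d) mod L)))"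

(* bullet_{k-1} C bullet_k Box_k  -->  bullet_{k-1} Box_{k-1} C bullet_k *)
definition t2 :: "nat \<Rightarrow> nat \<Rightarrow> letter list \<Rightarrow> nat \<Rightarrow> nat \<Rightarrow> letter list" where
  "t2 L n w j k =
     (let d = back_dist L w j; a = (j + L - d) mod L in
      map (\<lambda>x. if x = (j + 1) mod L then Pt k
                else let off = (x + L - a - 1) mod L + 1 in
                  if off = 1 then Hl ((k + n - 1) mod n)
                  else if off \<le> d then w ! ((x + L - 1) mod L)
                  else w ! x) [0..<L])"

(* Box_k bullet_k C bullet_{k+1}  -->  bullet_k C Box_{k+1} bullet_{k+1} *)
definition t4 :: "nat \<Rightarrow> nat \<Rightarrow> letter list \<Rightarrow> nat \<Rightarrow> nat \<Rightarrow> letter list" where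
  "t4 L n w j k =
     (let d = fwd_dist L w j; b = (j + d) mod L in
      map (\<lambda>x. if x = (j + L - 1) mod L then Pt k
                else let off = (b + L - x - 1) mod L + 1 in
                  if off = 1 then Hl ((k + 1) mod n)
                  else if off \<le> d then w ! ((x + 1) mod L)
                  else w ! x) [0..<L])"

(* all transitions (T1)-(T4) out of w, as a list of (rate, target), one entry per
   transition instance, indexed by the position j of the moving particle bullet_k *)
definition moves_at :: "nat \<Rightarrow> nat \<Rightarrow> (nat \<Rightarrow> real) \<Rightarrow> (nat \<Rightarrow> real) \<Rightarrow> letter list
    \<Rightarrow> nat \<Rightarrow> (real \<times> letter list) list" where
  "moves_at L n p q w j =
     (case w ! j of Hl _ \<Rightarrow> []
      | Pt k \<Rightarrow>
        (let r = (j + 1) mod L; l = (j + L - 1) mod L in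
         (case w ! r of Pt _ \<Rightarrow> []
          | Hl i \<Rightarrow>
             (if i \<noteq> k then [(p k, swp w j r)]                                   \<comment> \<open>T1\<close>
              else if w ! ((j + L - back_dist L w j) mod L) = Pt ((k + n - 1) mod n)
                   then [(p k, t2 L n w j k)] else []))                           \<comment> \<open>T2\<close>
         @
         (case w ! l of Pt _ \<Rightarrow> []
          | Hl i \<Rightarrow>
             (if i \<noteq> k then [(q k, swp w l j)]                                   \<comment> \<open>T3\<close>
              else if w ! ((j + fwd_dist L w j) mod L) = Pt ((k + 1) mod n)
                   then [(q k, t4 L n w j k)] else []))))"

definition moves :: "nat \<Rightarrow> nat \<Rightarrow> (nat \<Rightarrow> real) \<Rightarrow> (nat \<Rightarrow> real) \<Rightarrow> letter list
    \<Rightarrow> (real \<times> letter list) list" where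
  "moves L n p q w = concat (map (moves_at L n p q w) [0..<L])"

definition rate_to_fibre :: "nat \<Rightarrow> nat \<Rightarrow> (nat \<Rightarrow> real) \<Rightarrow> (nat \<Rightarrow> real) \<Rightarrow> letter list
    \<Rightarrow> aletter list \<Rightarrow> real" where
  "rate_to_fibre L n p q w \<psi> = sum_list [fst m. m \<leftarrow> moves L n p q w, Pi (snd m) = \<psi>]"

definition asep_moves_at :: "nat \<Rightarrow> (nat \<Rightarrow> real) \<Rightarrow> (nat \<Rightarrow> real) \<Rightarrow> aletter list
    \<Rightarrow> nat \<Rightarrow> (real \<times> aletter list) list" where
  "asep_moves_at L p q v j =
     (case v ! j of Vac \<Rightarrow> []
      | APt k \<Rightarrow>
        (let r = (j + 1) mod L; l = (j + L - 1) mod L in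
         (if v ! r = Vac then [(p k, swp v j r)] else [])
         @ (if v ! l = Vac then [(q k, swp v l j)] else [])))"

definition asep_rate :: "nat \<Rightarrow> (nat \<Rightarrow> real) \<Rightarrow> (nat \<Rightarrow> real) \<Rightarrow> aletter list
    \<Rightarrow> aletter list \<Rightarrow> real" where
  "asep_rate L p q v \<psi> =
     sum_list [fst m. m \<leftarrow> concat (map (asep_moves_at L p q v) [0..<L]), snd m = \<psi>]"

end

theory Submission
  imports Defs
begin

(* Every transition out of omega is listed by moves_at at the position j of the moving
   particle bullet_k, one entry per direction, and projects to the ASEP entry at j.
   (T1) and (T3) are adjacent exchanges already. (T2) moves bullet_k one step to the right
   and only shifts and relabels the holes between bullet_k and its predecessor, so after
   erasing hole labels it is the same exchange; symmetrically for (T4). Their guards, that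
   the neighbouring particle is bullet_(k-1) resp. bullet_(k+1), always hold by the cyclic
   order in Omega. So the move list of omega maps entrywise onto that of Pi omega, and
   filtering by the target gives equal rates for every psi. *)

lemma add_diff_mod_eq_if:
  fixes a b L :: nat
  assumes "a < L" "b \<le> L"
  shows "(a + L - b) mod L = (if b \<le> a then a - b else a + L - b)"
proof (cases "b \<le> a")
  case True
  then have "(a + L - b) mod L = (a - b + L) mod L" by (simp only: add_diff_assoc2)
  also have "\<dots> = a - b" using assms by (simp only: mod_add_self2) simp
  finally show ?thesis using True by simp
qed (use assms in simp)

lemma ring_pos_backward:
  fixes j x L :: nat
  assumes "j < L" "x < L"
  shows "x = (j + L - (j + L - x) mod L) mod L"
  using assms by (simp add: add_diff_mod_eq_if)

lemma ring_pos_forward: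
  fixes j x L :: nat
  assumes "j < L" "x < L"
  shows "x = (j + (x + L - j) mod L) mod L"
  using assms by (simp add: mod_add_right_eq)

lemma ring_pred_backward:
  fixes j e x L :: nat
  assumes "j < L" "e < L" "x = (j + L - e) mod L"
  shows "(x + L - 1) mod L = (j + L - Suc e) mod L"
proof -
  have "x < L" using assms by simp
  then show ?thesis
    using assms add_diff_mod_eq_if[of x L 1] add_diff_mod_eq_if[of j L "Suc e"]
      add_diff_mod_eq_if[of j L e]
    by auto
qed

(* The left-hand sides are the offsets computed in t2 and t4: the cyclic distance between x
   and the neighbouring particle at j -/+ d. *)
lemma backward_offset_mod:
  fixes L j d e x :: nat
  assumes "j < L" "0 < d" "d \<le> L" "e < L" "x = (j + L - e) mod L"
  shows "(x + L - (j + L - d) mod L - 1) mod L + 1 = (if e < d then d - e else L + d - e)"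
proof -
  define a where "a = (j + L - d) mod L"
  have x: "x = (if e \<le> j then j - e else j + L - e)"
    using assms add_diff_mod_eq_if[of j L e] by simp
  have a: "a = (if d \<le> j then j - d else j + L - d)"
    using assms add_diff_mod_eq_if[of j L d] a_def by simp
  have "x < L" "a + 1 \<le> L" using assms(1-4) a x by auto
  then have "(x + L - (a + 1)) mod L = (if a + 1 \<le> x then x - (a + 1) else x + L - (a + 1))"
    by (rule add_diff_mod_eq_if)
  moreover have "(if a + 1 \<le> x then x - (a + 1) else x + L - (a + 1)) + 1
      = (if e < d then d - e else L + d - e)"
    using x a assms(1-4) by (cases "e \<le> j"; cases "d \<le> j"; cases "e < d") auto
  ultimately show ?thesis unfolding a_def[symmetric] by simp
qed

lemma forward_offset_mod:
  fixes L j d e x :: nat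
  assumes "j < L" "0 < d" "d \<le> L" "e < L" "x = (j + e) mod L"
  shows "((j + d) mod L + L - x - 1) mod L + 1 = (if e < d then d - e else L + d - e)"
proof -
  define b where "b = (j + d) mod L"
  have x: "x = (if j + e < L then j + e else j + e - L)" using assms by (simp add: mod_if)
  have b: "b = (if j + d < L then j + d else j + d - L)" using assms b_def by (simp add: mod_if)
  have "b < L" "x + 1 \<le> L" using assms(1-4) b x by auto
  then have "(b + L - (x + 1)) mod L = (if x + 1 \<le> b then b - (x + 1) else b + L - (x + 1))"
    by (rule add_diff_mod_eq_if)
  moreover have "(if x + 1 \<le> b then b - (x + 1) else b + L - (x + 1)) + 1
      = (if e < d then d - e else L + d - e)"
    using x b assms(1-4) by (cases "j + e < L"; cases "j + d < L"; cases "e < d") auto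
  ultimately show ?thesis unfolding b_def[symmetric] by simp
qed

lemma back_dist_spec:
  assumes "j < L" "is_pt (w ! j)"
  shows "0 < back_dist L w j" "back_dist L w j \<le> L"
    "is_pt (w ! ((j + L - back_dist L w j) mod L))"
    "\<And>e. 0 < e \<Longrightarrow> e < back_dist L w j
      \<Longrightarrow> \<not> is_pt (w ! ((j + L - e) mod L))"
proof -
  have L: "0 < L \<and> is_pt (w ! ((j + L - L) mod L))" using assms by simp
  show "0 < back_dist L w j" "is_pt (w ! ((j + L - back_dist L w j) mod L))"
    unfolding back_dist_def
    using LeastI[of "\<lambda>d. 0 < d \<and> is_pt (w ! ((j + L - d) mod L))" L, OF L] by auto
  show "back_dist L w j \<le> L" unfolding back_dist_def using L by (rule Least_le)
  show "\<not> is_pt (w ! ((j + L - e) mod L))" if "0 < e" "e < back_dist L w j" for e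
    using that not_less_Least unfolding back_dist_def by blast
qed

lemma fwd_dist_spec:
  assumes "j < L" "is_pt (w ! j)"
  shows "0 < fwd_dist L w j" "fwd_dist L w j \<le> L"
    "is_pt (w ! ((j + fwd_dist L w j) mod L))"
    "\<And>e. 0 < e \<Longrightarrow> e < fwd_dist L w j
      \<Longrightarrow> \<not> is_pt (w ! ((j + e) mod L))"
proof -
  have L: "0 < L \<and> is_pt (w ! ((j + L) mod L))" using assms by simp
  show "0 < fwd_dist L w j" "is_pt (w ! ((j + fwd_dist L w j) mod L))"
    unfolding fwd_dist_def
    using LeastI[of "\<lambda>d. 0 < d \<and> is_pt (w ! ((j + d) mod L))" L, OF L] by auto
  show "fwd_dist L w j \<le> L" unfolding fwd_dist_def using L by (rule Least_le)
  show "\<not> is_pt (w ! ((j + e) mod L))" if "0 < e" "e < fwd_dist L w j" for e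
    using that not_less_Least unfolding fwd_dist_def by blast
qed

lemma proj_letter_eq_Vac_iff: "proj_letter y = Vac \<longleftrightarrow> \<not> is_pt y"
  by (cases y) (auto simp: is_pt_def)

lemma proj_letter_eq_APt_iff: "proj_letter y = APt k \<longleftrightarrow> y = Pt k"
  by (cases y) auto

lemma is_apt_proj_letter: "is_apt (proj_letter y) = is_pt y"
  by (cases y) (auto simp: is_apt_def is_pt_def)

lemma Pi_nth: "i < length w \<Longrightarrow> Pi w ! i = proj_letter (w ! i)"
  by (simp add: Pi_def)

lemma Pi_swp:
  "a < length w \<Longrightarrow> b < length w \<Longrightarrow> Pi (swp w a b) = swp (Pi w) a b"
  by (simp add: Pi_def swp_def map_update)

lemma Pi_t2_nth:
  assumes len: "length w = L" and j: "j < L" and ptj: "is_pt (w ! j)"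
    and e: "e < L" and x: "x = (j + L - e) mod L" and xr: "x \<noteq> (j + 1) mod L"
  shows "Pi (t2 L n w j k) ! x = (if e < back_dist L w j then Vac else Pi w ! x)"
proof -
  define d where "d = back_dist L w j"
  note spec = back_dist_spec[OF j ptj, folded d_def]
  define off where "off = (x + L - (j + L - d) mod L - 1) mod L + 1"
  have off: "off = (if e < d then d - e else L + d - e)"
    unfolding off_def using backward_offset_mod[OF j spec(1,2) e x] .
  have xL: "x < L" using j x by simp
  have t2x: "t2 L n w j k ! x = (if off = 1 then Hl ((k + n - 1) mod n)
      else if off \<le> d then w ! ((x + L - 1) mod L) else w ! x)"
    using xL xr by (simp add: t2_def Let_def d_def off_def)
  show ?thesis
  proof (cases "e < d")
    case True
    have "\<not> is_pt (w ! ((x + L - 1) mod L))" if "1 < off"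
      using spec(4)[of "Suc e"] that True off ring_pred_backward[OF j e x] by simp
    then have "proj_letter (t2 L n w j k ! x) = Vac"
      using True off t2x by (auto simp: proj_letter_eq_Vac_iff is_pt_def)
    then show ?thesis using True len xL by (simp add: Pi_nth t2_def Let_def d_def)
  next
    case False
    then have "d < off" using off e by simp
    then have "t2 L n w j k ! x = w ! x" using t2x spec(1) by simp
    then show ?thesis using False len xL by (simp add: Pi_nth t2_def Let_def d_def)
  qed
qed

lemma Pi_t4_nth:
  assumes len: "length w = L" and j: "j < L" and ptj: "is_pt (w ! j)"
    and e: "e < L" and x: "x = (j + e) mod L" and xl: "x \<noteq> (j + L - 1) mod L"
  shows "Pi (t4 L n w j k) ! x = (if e < fwd_dist L w j then Vac else Pi w ! x)"
proof -
  define d where "d = fwd_dist L w j"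
  note spec = fwd_dist_spec[OF j ptj, folded d_def]
  define off where "off = ((j + d) mod L + L - x - 1) mod L + 1"
  have off: "off = (if e < d then d - e else L + d - e)"
    unfolding off_def using forward_offset_mod[OF j spec(1,2) e x] .
  have xL: "x < L" using j x by simp
  have t4x: "t4 L n w j k ! x = (if off = 1 then Hl ((k + 1) mod n)
      else if off \<le> d then w ! ((x + 1) mod L) else w ! x)"
    using xL xl by (simp add: t4_def Let_def d_def off_def)
  show ?thesis
  proof (cases "e < d")
    case True
    have "\<not> is_pt (w ! ((x + 1) mod L))" if "1 < off"
      using spec(4)[of "Suc e"] that True off x by (simp add: mod_Suc_eq)
    then have "proj_letter (t4 L n w j k ! x) = Vac"
      using True off t4x by (auto simp: proj_letter_eq_Vac_iff is_pt_def)
    then show ?thesis using True len xL by (simp add: Pi_nth t4_def Let_def d_def)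
  next
    case False
    then have "d < off" using off e by simp
    then have "t4 L n w j k ! x = w ! x" using t4x spec(1) by simp
    then show ?thesis using False len xL by (simp add: Pi_nth t4_def Let_def d_def)
  qed
qed

lemma Pi_t2:
  assumes len: "length w = L" and j: "j < L"
    and wj: "w ! j = Pt k" and wr: "w ! ((j + 1) mod L) = Hl i"
  shows "Pi (t2 L n w j k) = swp (Pi w) j ((j + 1) mod L)"
proof (rule nth_equalityI)
  let ?r = "(j + 1) mod L"
  have ptj: "is_pt (w ! j)" using wj by (simp add: is_pt_def)
  have rL: "?r < L" and rj: "?r \<noteq> j" using j wj wr by auto
  show "length (Pi (t2 L n w j k)) = length (swp (Pi w) j ((j + 1) mod L))"
    by (simp add: Pi_def t2_def swp_def len Let_def)
  fix x assume "x < length (Pi (t2 L n w j k))"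
  then have xL: "x < L" by (simp add: Pi_def t2_def Let_def)
  have swp_x: "swp (Pi w) j ?r ! x
      = (if x = ?r then APt k else if x = j then Vac else proj_letter (w ! x))"
    using xL j rL rj wj wr len by (simp add: swp_def Pi_def nth_list_update)
  define e where "e = (j + L - x) mod L"
  have eL: "e < L" and xe: "x = (j + L - e) mod L"
    using j xL ring_pos_backward[OF j xL] by (auto simp: e_def)
  show "Pi (t2 L n w j k) ! x = swp (Pi w) j ((j + 1) mod L) ! x"
  proof (cases "x = ?r")
    case True
    then show ?thesis using swp_x xL len by (simp add: Pi_def t2_def Let_def)
  next
    case False
    have "proj_letter (w ! x) = Vac" if "x \<noteq> j" "e < back_dist L w j"
      using back_dist_spec(4)[OF j ptj, of e] that xe j
      by (cases "e = 0") (auto simp: proj_letter_eq_Vac_iff)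
    then show ?thesis
      using Pi_t2_nth[OF len j ptj eL xe] False swp_x back_dist_spec(1)[OF j ptj] j
      by (auto simp: e_def Pi_nth len xL)
  qed
qed

lemma Pi_t4:
  assumes len: "length w = L" and j: "j < L"
    and wj: "w ! j = Pt k" and wl: "w ! ((j + L - 1) mod L) = Hl i"
  shows "Pi (t4 L n w j k) = swp (Pi w) ((j + L - 1) mod L) j"
proof (rule nth_equalityI)
  let ?l = "(j + L - 1) mod L"
  have ptj: "is_pt (w ! j)" using wj by (simp add: is_pt_def)
  have lL: "?l < L" and lj: "?l \<noteq> j" using j wj wl by auto
  show "length (Pi (t4 L n w j k)) = length (swp (Pi w) ((j + L - 1) mod L) j)"
    by (simp add: Pi_def t4_def swp_def len Let_def)
  fix x assume "x < length (Pi (t4 L n w j k))"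
  then have xL: "x < L" by (simp add: Pi_def t4_def Let_def)
  have swp_x: "swp (Pi w) ?l j ! x
      = (if x = j then Vac else if x = ?l then APt k else proj_letter (w ! x))"
    using xL j lL lj wj wl len by (simp add: swp_def Pi_def nth_list_update)
  define e where "e = (x + L - j) mod L"
  have eL: "e < L" and xe: "x = (j + e) mod L"
    using j xL ring_pos_forward[OF j xL] by (auto simp: e_def)
  show "Pi (t4 L n w j k) ! x = swp (Pi w) ((j + L - 1) mod L) j ! x"
  proof (cases "x = ?l")
    case True
    then show ?thesis using swp_x xL len lj by (simp add: Pi_def t4_def Let_def)
  next
    case False
    have "proj_letter (w ! x) = Vac" if "x \<noteq> j" "e < fwd_dist L w j"
      using fwd_dist_spec(4)[OF j ptj, of e] that xe j
      by (cases "e = 0") (auto simp: proj_letter_eq_Vac_iff)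
    then show ?thesis
      using Pi_t4_nth[OF len j ptj eL xe] False swp_x fwd_dist_spec(1)[OF j ptj] j
      by (auto simp: e_def Pi_nth len xL)
  qed
qed

lemma succ_mod_pred_mod:
  fixes k n :: nat
  assumes "k < n"
  shows "((k + 1) mod n + n - 1) mod n = k"
proof (cases "k + 1 < n")
  case False
  then have "k + 1 = n" using assms by simp
  then show ?thesis by simp
qed (use assms in simp)

lemma in_Omega_next_particle:
  assumes om: "in_Omega L n w" and j: "j < L" and wj: "w ! j = Pt k"
  shows "w ! ((j + fwd_dist L w j) mod L) = Pt ((k + 1) mod n)"
proof -
  have "is_pt (w ! j)" using wj by (simp add: is_pt_def)
  note spec = fwd_dist_spec[OF j this]
  show ?thesis using om j wj spec unfolding in_Omega_def by blast
qed

lemma in_Omega_prev_particle: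
  assumes om: "in_Omega L n w" and j: "j < L" and wj: "w ! j = Pt k"
  shows "w ! ((j + L - back_dist L w j) mod L) = Pt ((k + n - 1) mod n)"
proof -
  have "is_pt (w ! j)" using wj by (simp add: is_pt_def)
  define d where "d = back_dist L w j"
  note spec = back_dist_spec[OF j \<open>is_pt (w ! j)\<close>, folded d_def]
  define a where "a = (j + L - d) mod L"
  have aL: "a < L" using j by (simp add: a_def)
  obtain k' where wa: "w ! a = Pt k'"
    using spec(3) by (cases "w ! a") (auto simp: a_def is_pt_def)
  have "w ! a \<in> set w" using aL om by (simp add: in_Omega_def)
  then have k'n: "k' < n" using om wa by (fastforce simp: in_Omega_def)
  have ad: "(a + d) mod L = j" using j spec(2) by (simp add: a_def mod_add_left_eq)
  have holes: "\<not> is_pt (w ! ((a + e) mod L))" if "0 < e" "e < d" for e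
  proof -
    have "(a + e) mod L = (j + L - (d - e)) mod L"
      using that spec(2) by (simp add: a_def mod_add_left_eq)
    then show ?thesis using spec(4)[of "d - e"] that by simp
  qed
  have "w ! ((a + d) mod L) = Pt ((k' + 1) mod n)"
    using om aL wa spec(1,2) ad \<open>is_pt (w ! j)\<close> holes unfolding in_Omega_def by blast
  then have "k = (k' + 1) mod n" using ad wj by simp
  then show ?thesis using wa succ_mod_pred_mod[OF k'n] by (simp add: a_def d_def)
qed

lemma Pi_moves_at:
  assumes om: "in_Omega L n w" and j: "j < L"
  shows "map (apsnd Pi) (moves_at L n p q w j) = asep_moves_at L p q (Pi w) j"
proof -
  have len: "length w = L" using om by (simp add: in_Omega_def)
  let ?r = "(j + 1) mod L" and ?l = "(j + L - 1) mod L"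
  have rL: "?r < L" and lL: "?l < L" using j by auto
  show ?thesis
  proof (cases "w ! j")
    case (Hl i)
    then show ?thesis using j len by (simp add: moves_at_def asep_moves_at_def Pi_nth)
  next
    case (Pt k)
    have "Pi w ! j = APt k" using Pt j len by (simp add: Pi_nth)
    then show ?thesis
      using Pt rL lL len j in_Omega_prev_particle[OF om j Pt] in_Omega_next_particle[OF om j Pt]
        Pi_t2[OF len j Pt] Pi_t4[OF len j Pt]
      by (cases "w ! ?r"; cases "w ! ?l")
        (simp_all add: moves_at_def asep_moves_at_def Pi_nth Pi_swp)
  qed
qed

lemma Pi_moves:
  assumes "in_Omega L n w"
  shows "map (apsnd Pi) (moves L n p q w)
    = concat (map (asep_moves_at L p q (Pi w)) [0..<L])"
  unfolding moves_def map_concat map_map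
  by (rule arg_cong[where f = concat], rule map_cong) (auto simp: Pi_moves_at[OF assms])

lemma filter_map_apsnd:
  "[fst m. m \<leftarrow> xs, f (snd m) = y] = [fst m. m \<leftarrow> map (apsnd f) xs, snd m = y]"
  by (induction xs) auto

lemma Pi_in_Psi:
  assumes om: "in_Omega L n w"
  shows "in_Psi L n (Pi w)"
proof -
  have len: "length (Pi w) = L" using om by (simp add: in_Omega_def Pi_def)
  have nth: "Pi w ! i = proj_letter (w ! i)" if "i < L" for i
    using that om by (simp add: in_Omega_def Pi_nth)
  have range: "case x of APt k \<Rightarrow> k < n | Vac \<Rightarrow> True"
    if x: "x \<in> set (Pi w)" for x
  proof -
    obtain y where y: "y \<in> set w" "x = proj_letter y" using x by (auto simp: Pi_def)
    have "case y of Pt k \<Rightarrow> k < n | Hl i \<Rightarrow> i < n"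
      using om y(1) unfolding in_Omega_def by blast
    then show ?thesis using y(2) by (cases y) auto
  qed
  have "{i. i < L \<and> Pi w ! i = APt k} = {i. i < L \<and> w ! i = Pt k}" for k
    using nth by (auto simp: proj_letter_eq_APt_iff)
  then have unique: "\<forall>k<n. card {i. i < L \<and> Pi w ! i = APt k} = 1"
    using om by (simp add: in_Omega_def)
  have cyclic: "\<forall>i<L. \<forall>k d. Pi w ! i = APt k \<and> 0 < d \<and> d \<le> L
        \<and> is_apt (Pi w ! ((i + d) mod L))
        \<and> (\<forall>e. 0 < e \<and> e < d
              \<longrightarrow> \<not> is_apt (Pi w ! ((i + e) mod L)))
        \<longrightarrow> Pi w ! ((i + d) mod L) = APt ((k + 1) mod n)"
    using om nth unfolding in_Omega_def
    by (auto simp: proj_letter_eq_APt_iff is_apt_proj_letter)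
  show ?thesis unfolding in_Psi_def using len range unique cyclic by blast
qed

theorem proposition3p2:
  fixes L n :: nat and p q :: "nat \<Rightarrow> real"
  assumes "1 \<le> n" and "n \<le> L"
    and "\<And>k. k < n \<Longrightarrow> 0 \<le> p k" and "\<And>k. k < n \<Longrightarrow> 0 \<le> q k"
  shows "\<forall>\<omega> \<psi>. in_Omega L n \<omega> \<and> in_Psi L n \<psi> \<and> \<psi> \<noteq> Pi \<omega> \<longrightarrow>
           in_Psi L n (Pi \<omega>) \<and>
           rate_to_fibre L n p q \<omega> \<psi> = asep_rate L p q (Pi \<omega>) \<psi>"
proof (intro allI impI conjI)
  fix \<omega> \<psi>
  assume "in_Omega L n \<omega> \<and> in_Psi L n \<psi> \<and> \<psi> \<noteq> Pi \<omega>"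
  then have om: "in_Omega L n \<omega>" by simp
  show "in_Psi L n (Pi \<omega>)" using Pi_in_Psi[OF om] .
  show "rate_to_fibre L n p q \<omega> \<psi> = asep_rate L p q (Pi \<omega>) \<psi>"
    unfolding rate_to_fibre_def asep_rate_def filter_map_apsnd[where f = Pi] Pi_moves[OF om]
    ..
qed

end
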